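(* Let $X',X''$ be a disjoint cover of an index set $X$, $\Pi:=\Pi X$, $\Pi':=\Pi X'$, $\Pi'':=\Pi X''$, and let $\preceq\subseteq(\Pi\times\Pi)\cup(\Pi'\times\Pi')\cup(\Pi''\times\Pi'')$ be a smooth (generalized) Hamming relation with associated $\mu$. Then ($\mu$*3) holds: for every $\Sigma\subseteq\Pi$, with $\Sigma'':=\Sigma\upharpoonright X''$, $\mu(\Pi'\times\Sigma'')\upharpoonright X''\subseteq\mu(\Sigma)\upharpoonright X''$. Consequently, for the size notion "$B\subseteq A$ is big iff $\mu(A)\subseteq B\subseteq A$", condition (S*3) holds: for $A\subseteq\Sigma\subseteq\Pi$, if $A$ is big in $\Sigma$ then there is $B$ big in $\Pi'\times\Sigma''$ with $B\upharpoonright X''\subseteq A\upharpoonright X''$.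
   Context: $\Pi X$ is the product of the value sets over the indices in $X$. Elements $\sigma\in\Pi$ are written $\sigma=\sigma'\circ\sigma''$ (concatenation) with $\sigma'=\sigma\upharpoonright X'$, $\sigma''=\sigma\upharpoonright X''$; $\Sigma\upharpoonright Y$ is the set of restrictions. $\preceq$ is a (generalized) Hamming relation iff $\preceq$ is reflexive and for all $\sigma,\tau\in\Pi$: $\sigma\preceq\tau\iff(\sigma'\preceq\tau'$ and $\sigma''\preceq\tau'')$. $x\prec y$ means $x\preceq y$ and $x\neq y$. For a set $A$ (subset of $\Pi$, $\Pi'$ or $\Pi''$), $\mu(A):=\{x\in A:\neg\exists x'\in A.\,x'\prec x\}$. $\preceq$ is smooth iff for every such $A$ and every $x\in A-\mu(A)$ there is $x'\in\mu(A)$ with $x'\prec x$. *)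

theory Defs
  imports "HOL-Library.FuncSet"
begin

text \<open>Elements of a product \<open>\<Pi>Y\<close> are extensional functions (PiE Y V).
  Restriction of an element is restrict; of a set, the image.\<close>

definition restr :: "('i \<Rightarrow> 'v) set \<Rightarrow> 'i set \<Rightarrow> ('i \<Rightarrow> 'v) set" where
  "restr S Y = (\<lambda>s. restrict s Y) ` S"

definition concat :: "'i set \<Rightarrow> ('i \<Rightarrow> 'v) \<Rightarrow> ('i \<Rightarrow> 'v) \<Rightarrow> ('i \<Rightarrow> 'v)" where
  "concat X' s1 s2 = (\<lambda>i. if i \<in> X' then s1 i else s2 i)"

definition prodset :: "'i set \<Rightarrow> ('i \<Rightarrow> 'v) set \<Rightarrow> ('i \<Rightarrow> 'v) set \<Rightarrow> ('i \<Rightarrow> 'v) set" where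
  "prodset X' A B = {concat X' a b | a b. a \<in> A \<and> b \<in> B}"

definition strict :: "('a \<Rightarrow> 'a \<Rightarrow> bool) \<Rightarrow> 'a \<Rightarrow> 'a \<Rightarrow> bool" where
  "strict le x y \<longleftrightarrow> le x y \<and> x \<noteq> y"

definition mu :: "('a \<Rightarrow> 'a \<Rightarrow> bool) \<Rightarrow> 'a set \<Rightarrow> 'a set" where
  "mu le A = {x \<in> A. \<not> (\<exists>x'\<in>A. strict le x' x)}"

definition hamming_rel :: "('i \<Rightarrow> 'v set) \<Rightarrow> 'i set \<Rightarrow> 'i set \<Rightarrow> 'i set
    \<Rightarrow> (('i \<Rightarrow> 'v) \<Rightarrow> ('i \<Rightarrow> 'v) \<Rightarrow> bool) \<Rightarrow> bool" where
  "hamming_rel V X X' X'' le \<longleftrightarrow>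
     (\<forall>x \<in> PiE X V \<union> PiE X' V \<union> PiE X'' V. le x x) \<and>
     (\<forall>\<sigma>\<in>PiE X V. \<forall>\<tau>\<in>PiE X V.
        le \<sigma> \<tau> \<longleftrightarrow> (le (restrict \<sigma> X') (restrict \<tau> X') \<and> le (restrict \<sigma> X'') (restrict \<tau> X'')))"

definition smooth :: "('i \<Rightarrow> 'v set) \<Rightarrow> 'i set \<Rightarrow> 'i set \<Rightarrow> 'i set
    \<Rightarrow> (('i \<Rightarrow> 'v) \<Rightarrow> ('i \<Rightarrow> 'v) \<Rightarrow> bool) \<Rightarrow> bool" where
  "smooth V X X' X'' le \<longleftrightarrow>
     (\<forall>A. (A \<subseteq> PiE X V \<or> A \<subseteq> PiE X' V \<or> A \<subseteq> PiE X'' V) \<longrightarrow>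
        (\<forall>x \<in> A - mu le A. \<exists>x' \<in> mu le A. strict le x' x))"

definition big :: "('a \<Rightarrow> 'a \<Rightarrow> bool) \<Rightarrow> 'a set \<Rightarrow> 'a set \<Rightarrow> bool" where
  "big le A B \<longleftrightarrow> mu le A \<subseteq> B \<and> B \<subseteq> A"

end

theory Submission
  imports Defs
begin

text \<open>If \<open>a \<circ> b\<close> is minimal in \<open>\<Pi>' \<times> B\<close>, then \<open>b\<close> is minimal in \<open>B\<close>: any \<open>c \<prec> b\<close> in \<open>B\<close>
  would give \<open>a \<circ> c \<prec> a \<circ> b\<close> by the Hamming property and reflexivity at \<open>a\<close>. Conversely,
  for \<open>b\<close> minimal in \<open>\<Sigma>''\<close> pick \<open>s \<in> \<Sigma>\<close> with \<open>s'' = b\<close>; if \<open>s\<close> is not minimal, smoothness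
  yields \<open>t \<in> \<mu>(\<Sigma>)\<close> with \<open>t \<prec> s\<close>, whence \<open>t'' \<preceq> b\<close> and so \<open>t'' = b\<close>. Hence
  \<open>\<mu>(\<Pi>' \<times> \<Sigma>'')\<upharpoonright>X'' \<subseteq> \<mu>(\<Sigma>'') \<subseteq> \<mu>(\<Sigma>)\<upharpoonright>X''\<close>, and (S*3) follows with \<open>B = \<mu>(\<Pi>' \<times> \<Sigma>'')\<close>.\<close>

lemma concat_in_PiE:
  assumes "a \<in> PiE X' V" "b \<in> PiE X'' V" "X' \<union> X'' = X"
  shows "concat X' a b \<in> PiE X V"
  using assms unfolding concat_def PiE_def Pi_def extensional_def by auto

lemma restrict_concat_fst:
  assumes "a \<in> PiE X' V"
  shows "restrict (concat X' a b) X' = a"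
  using assms unfolding concat_def by (auto simp: restrict_def PiE_def extensional_def)

lemma restrict_concat_snd:
  assumes "b \<in> PiE X'' V" "X' \<inter> X'' = {}"
  shows "restrict (concat X' a b) X'' = b"
  using assms unfolding concat_def by (auto simp: restrict_def PiE_def extensional_def fun_eq_iff)

lemma mu_subset: "mu le A \<subseteq> A"
  unfolding mu_def by auto

lemma big_mu: "big le A (mu le A)"
  by (simp add: big_def mu_subset)

lemma hamming_rel_refl:
  "hamming_rel V X X' X'' le \<Longrightarrow> x \<in> PiE X V \<union> PiE X' V \<union> PiE X'' V \<Longrightarrow> le x x"
  unfolding hamming_rel_def by blast

lemma hamming_rel_iff:
  assumes "hamming_rel V X X' X'' le" "\<sigma> \<in> PiE X V" "\<tau> \<in> PiE X V"
  shows "le \<sigma> \<tau> \<longleftrightarrow> le (restrict \<sigma> X') (restrict \<tau> X') \<and> le (restrict \<sigma> X'') (restrict \<tau> X'')"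
  using assms unfolding hamming_rel_def by blast

lemma mu_minimal: "x \<in> mu le A \<Longrightarrow> y \<in> A \<Longrightarrow> le y x \<Longrightarrow> y = x"
  unfolding mu_def strict_def by auto

lemma smooth_obtain_mu:
  assumes "smooth V X X' X'' le" "A \<subseteq> PiE X V" "x \<in> A" "x \<notin> mu le A"
  obtains y where "y \<in> mu le A" "strict le y x"
  using assms unfolding smooth_def by (meson DiffI)

lemma restr_mu_prodset_subset_mu:
  assumes disj: "X' \<inter> X'' = {}" and cover: "X' \<union> X'' = X"
    and ham: "hamming_rel V X X' X'' le" and B: "B \<subseteq> PiE X'' V"
  shows "restr (mu le (prodset X' (PiE X' V) B)) X'' \<subseteq> mu le B"
proof
  fix z assume "z \<in> restr (mu le (prodset X' (PiE X' V) B)) X''"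
  then obtain a b where x_min: "concat X' a b \<in> mu le (prodset X' (PiE X' V) B)"
    and a: "a \<in> PiE X' V" and b: "b \<in> B" and z: "z = restrict (concat X' a b) X''"
    unfolding restr_def mu_def prodset_def by auto
  have bP: "b \<in> PiE X'' V" using b B by auto
  have b_min: "c = b" if c: "c \<in> B" and cb: "le c b" for c
  proof -
    have cP: "c \<in> PiE X'' V" using c B by auto
    have "le (concat X' a c) (concat X' a b)"
      using cb hamming_rel_refl[OF ham] a
      by (simp add: hamming_rel_iff[OF ham concat_in_PiE[OF a cP cover] concat_in_PiE[OF a bP cover]]
          restrict_concat_fst[OF a] restrict_concat_snd[OF bP disj] restrict_concat_snd[OF cP disj])
    moreover have "concat X' a c \<in> prodset X' (PiE X' V) B"
      unfolding prodset_def using a c by auto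
    ultimately have "concat X' a c = concat X' a b"
      using mu_minimal[OF x_min] by simp
    then show "c = b"
      by (metis restrict_concat_snd[OF bP disj] restrict_concat_snd[OF cP disj])
  qed
  show "z \<in> mu le B"
    using z b b_min restrict_concat_snd[OF bP disj] unfolding mu_def strict_def by auto
qed

lemma mu_restr_subset_restr_mu:
  assumes ham: "hamming_rel V X X' X'' le" and sm: "smooth V X X' X'' le"
    and S: "S \<subseteq> PiE X V"
  shows "mu le (restr S X'') \<subseteq> restr (mu le S) X''"
proof
  fix b assume b_min: "b \<in> mu le (restr S X'')"
  then obtain s where s: "s \<in> S" and b: "b = restrict s X''"
    unfolding mu_def restr_def by auto
  show "b \<in> restr (mu le S) X''"
  proof (cases "s \<in> mu le S")
    case True
    then show ?thesis unfolding restr_def using b by auto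
  next
    case False
    with sm S s obtain t where t: "t \<in> mu le S" and ts: "strict le t s"
      by (rule smooth_obtain_mu)
    have tS: "t \<in> S" using subsetD[OF mu_subset t] .
    have "le (restrict t X'') b"
      using ts b hamming_rel_iff[OF ham] S s tS unfolding strict_def by auto
    moreover have "restrict t X'' \<in> restr S X''"
      unfolding restr_def using tS by auto
    ultimately have "restrict t X'' = b"
      using mu_minimal[OF b_min] by simp
    then show ?thesis unfolding restr_def using t by auto
  qed
qed

theorem fact4p10:
  fixes X X' X'' :: "'i set" and V :: "'i \<Rightarrow> 'v set"
    and le :: "('i \<Rightarrow> 'v) \<Rightarrow> ('i \<Rightarrow> 'v) \<Rightarrow> bool"
  assumes disj: "X' \<inter> X'' = {}" and cover: "X' \<union> X'' = X"
    and dom: "\<forall>x y. le x y \<longrightarrow> (x, y) \<in> (PiE X V \<times> PiE X V) \<union> (PiE X' V \<times> PiE X' V) \<union> (PiE X'' V \<times> PiE X'' V)"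
    and ham: "hamming_rel V X X' X'' le"
    and sm: "smooth V X X' X'' le"
  shows "(\<forall>S. S \<subseteq> PiE X V \<longrightarrow>
            restr (mu le (prodset X' (PiE X' V) (restr S X''))) X'' \<subseteq> restr (mu le S) X'')
       \<and> (\<forall>A S. A \<subseteq> S \<longrightarrow> S \<subseteq> PiE X V \<longrightarrow> big le S A \<longrightarrow>
            (\<exists>B. big le (prodset X' (PiE X' V) (restr S X'')) B \<and> restr B X'' \<subseteq> restr A X''))"
proof -
  have mu3: "restr (mu le (prodset X' (PiE X' V) (restr S X''))) X'' \<subseteq> restr (mu le S) X''"
    if S: "S \<subseteq> PiE X V" for S
  proof -
    have "restr S X'' \<subseteq> PiE X'' V"
      unfolding restr_def using S cover by (auto simp: PiE_def Pi_def)
    from restr_mu_prodset_subset_mu[OF disj cover ham this]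
    show ?thesis using mu_restr_subset_restr_mu[OF ham sm S] by (rule order_trans)
  qed
  show ?thesis
  proof (intro conjI allI impI)
    fix S assume "S \<subseteq> PiE X V"
    then show "restr (mu le (prodset X' (PiE X' V) (restr S X''))) X'' \<subseteq> restr (mu le S) X''"
      by (rule mu3)
  next
    fix A S assume "A \<subseteq> S" and S: "S \<subseteq> PiE X V" and "big le S A"
    then have "restr (mu le S) X'' \<subseteq> restr A X''"
      unfolding big_def restr_def by (intro image_mono) simp
    with mu3[OF S] big_mu
    show "\<exists>B. big le (prodset X' (PiE X' V) (restr S X'')) B \<and> restr B X'' \<subseteq> restr A X''"
      by (meson order_trans)
  qed
qed

end
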